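(* Let $f_0(s)=\tfrac32 s^{2/3}$ and, for $t\in\mathbb C$ with $0<|t|<1$, let $f_t(s)=2^{-1/3}|t|^{2/3}\int_0^{\cosh^{-1}(s/|t|)}(\sinh 2\tau-2\tau)^{1/3}\,d\tau$ for $s\geq |t|$. Then: (1) for every $\delta\in(0,1)$ and every integer $k\geq 0$, the $k$-th derivatives $f_t^{(k)}(s)$ converge uniformly on $s\in[\delta,1]$ to $f_0^{(k)}(s)$ as $t\to 0$; (2) for every $0<\delta'<\delta<\tfrac14$ there is $\alpha_{\delta'}>0$ such that for $|t|<\alpha_{\delta'}$ and $s\in[\delta',\delta]$ one has $\tfrac12\leq f_t'(s)/f_0'(s)\leq 2$ and $\tfrac12\leq f_t''(s)/f_0''(s)\leq 2$. *)

theory Defs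
  imports "HOL-Analysis.Analysis"
begin

definition f0 :: "real \<Rightarrow> real" where
  "f0 s = 3/2 * s powr (2/3)"

text \<open>For complex t with 0 < |t| < 1 and s \<ge> |t|:
  f_t(s) = 2^(-1/3) |t|^(2/3) \<integral>_0^{arcosh(s/|t|)} (sinh 2\<tau> - 2\<tau>)^(1/3) d\<tau>.
  (Values for s < |t| are irrelevant junk.)\<close>
definition ft :: "complex \<Rightarrow> real \<Rightarrow> real" where
  "ft t s = 2 powr (-1/3) * cmod t powr (2/3) *
     integral {0..arcosh (s / cmod t)} (\<lambda>\<tau>. (sinh (2*\<tau>) - 2*\<tau>) powr (1/3))"

end

theory Submission
  imports Defs "HOL-Real_Asymp.Real_Asymp"
begin

(*
  Write a = |t|.  A substitution shows  f_t(s) = s^(2/3) * Psi(a/s)  for s > 0, with the fixed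
  profile  Psi(r) = r^(2/3) * 2^(-1/3) * integral_0^arcosh(1/r) (sinh 2u - 2u)^(1/3) du  on (0,1).
  Differentiating k times gives  f_t^(k)(s) = s^(2/3-k) * Psi_k(a/s)  (for s > 2a), where
  Psi_0 = Psi,  Psi_(k+1) = (2/3 - k) Psi_k - L Psi_k  and  L g (r) = r g'(r)  is the Euler
  operator; likewise  f_0^(k)(s) = c_k s^(2/3-k)  with  c_0 = 3/2,  c_(k+1) = (2/3 - k) c_k.
  So both parts of the theorem reduce to the limits  Psi_k(r) -> c_k  as r -> 0+.

  The profile
  satisfies  L Psi = (2/3) Psi - Phi  for an explicit elementary Phi with Phi -> 1, and
  Psi -> 3/2 by L'Hopital's rule, so Psi and every Psi_k belong to the class and Psi_k -> c_k.
  This yields  f_t^(k)(s) - f_0^(k)(s) = o(1) * s^(2/3-k)  uniformly for s >= delta as t -> 0,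
  from which the uniform convergence (part 1) and the ratio bounds (part 2) follow.
*)

definition euler :: "(real \<Rightarrow> real) \<Rightarrow> real \<Rightarrow> real" where
  "euler g r = r * deriv g r"

(* g is differentiable on (0,1/2) and has a limit at 0+.  The interval (0,1/2) is where the
   argument |t|/s of the profile lives when s > 2|t|. *)
definition tame :: "(real \<Rightarrow> real) \<Rightarrow> bool" where
  "tame g \<longleftrightarrow>
     (\<forall>r\<in>{0<..<1/2}. g differentiable (at r)) \<and> (\<exists>l. (g \<longlongrightarrow> l) (at_right 0))"

fun euler_tame :: "nat \<Rightarrow> (real \<Rightarrow> real) \<Rightarrow> bool" where
  "euler_tame 0 g \<longleftrightarrow> tame g"
| "euler_tame (Suc n) g \<longleftrightarrow>
     tame g \<and> (euler g \<longlongrightarrow> 0) (at_right 0) \<and> euler_tame n (euler g)"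

lemma euler_tame_tame: "euler_tame n g \<Longrightarrow> tame g"
  by (cases n) auto

lemma euler_tame_SucD: "euler_tame (Suc n) g \<Longrightarrow> euler_tame n g"
  by (induction n arbitrary: g) auto

lemma tame_has_deriv:
  "tame g \<Longrightarrow> r \<in> {0<..<1/2} \<Longrightarrow> (g has_real_derivative deriv g r) (at r)"
  unfolding tame_def using DERIV_deriv_iff_real_differentiable by blast

lemma eq_on_open_nhds:
  assumes "open U" "\<forall>y\<in>U. f y = g y" "x \<in> U"
  shows "eventually (\<lambda>y. f y = g y) (nhds x)"
  unfolding eventually_nhds using assms by blast

lemma eq_on_interval_at_right:
  assumes eq: "\<forall>x\<in>{0<..<1/2}. f x = g x"
  shows "eventually (\<lambda>x. f x = g x) (at_right (0::real))"
proof -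
  have "eventually (\<lambda>x. x \<in> {0<..<(1/2::real)}) (at_right 0)"
    by (rule eventually_at_right_real) simp
  then show ?thesis by eventually_elim (use eq in auto)
qed

lemma tame_cong:
  assumes eq: "\<forall>x\<in>{0<..<1/2}. f x = g x" and f: "tame f"
  shows "tame g"
proof -
  have "g differentiable (at r)" if r: "r \<in> {0<..<1/2}" for r
  proof -
    have "(g has_real_derivative deriv f r) (at r)"
      using tame_has_deriv[OF f r]
        DERIV_cong_ev[OF refl eq_on_open_nhds[OF open_greaterThanLessThan eq r] refl]
      by blast
    then show ?thesis using real_differentiable_def by blast
  qed
  moreover have "\<exists>l. (g \<longlongrightarrow> l) (at_right 0)"
    using f tendsto_cong[OF eq_on_interval_at_right[OF eq]] unfolding tame_def by blast
  ultimately show ?thesis unfolding tame_def by blast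
qed

lemma euler_cong:
  assumes eq: "\<forall>x\<in>{0<..<1/2}. f x = g x"
  shows "\<forall>x\<in>{0<..<1/2}. euler f x = euler g x"
  unfolding euler_def
  using deriv_cong_ev[OF eq_on_open_nhds[OF open_greaterThanLessThan eq] refl] by simp

lemma euler_tame_cong:
  "\<forall>x\<in>{0<..<1/2}. f x = g x \<Longrightarrow> euler_tame n f \<Longrightarrow> euler_tame n g"
proof (induction n arbitrary: f g)
  case 0
  then show ?case using tame_cong by simp
next
  case (Suc n)
  have eq': "\<forall>x\<in>{0<..<1/2}. euler f x = euler g x"
    by (rule euler_cong[OF Suc.prems(1)])
  then show ?case
    using Suc tame_cong tendsto_cong[OF eq_on_interval_at_right[OF eq']] by auto
qed

lemma euler_tame_SucI:
  assumes "tame g" "euler_tame n h" "(h \<longlongrightarrow> 0) (at_right 0)"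
    and eq: "\<forall>r\<in>{0<..<1/2}. euler g r = h r"
  shows "euler_tame (Suc n) g"
proof -
  have eq': "\<forall>r\<in>{0<..<1/2}. h r = euler g r" using eq by simp
  show ?thesis
    using assms euler_tame_cong[OF eq'] tendsto_cong[OF eq_on_interval_at_right[OF eq']]
    by auto
qed

lemma tame_lin:
  assumes f: "tame f" and g: "tame g"
  shows "tame (\<lambda>x. \<alpha> * f x + \<beta> * g x)"
proof -
  obtain lf lg where "(f \<longlongrightarrow> lf) (at_right 0)" "(g \<longlongrightarrow> lg) (at_right 0)"
    using f g unfolding tame_def by blast
  then have "((\<lambda>x. \<alpha> * f x + \<beta> * g x) \<longlongrightarrow> \<alpha> * lf + \<beta> * lg) (at_right 0)"
    by (intro tendsto_intros)
  then show ?thesis using f g unfolding tame_def by (auto intro!: derivative_intros)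
qed

lemma euler_tame_lin:
  "euler_tame n f \<Longrightarrow> euler_tame n g \<Longrightarrow> euler_tame n (\<lambda>x. \<alpha> * f x + \<beta> * g x)"
proof (induction n arbitrary: f g)
  case 0
  then show ?case using tame_lin by simp
next
  case (Suc n)
  then have f: "tame f" and g: "tame g" by simp_all
  show ?case
  proof (rule euler_tame_SucI)
    show "tame (\<lambda>x. \<alpha> * f x + \<beta> * g x)" by (rule tame_lin[OF f g])
    show "euler_tame n (\<lambda>x. \<alpha> * euler f x + \<beta> * euler g x)" using Suc by simp
    have "((\<lambda>x. \<alpha> * euler f x + \<beta> * euler g x) \<longlongrightarrow> \<alpha> * 0 + \<beta> * 0) (at_right 0)"
      using Suc.prems by (intro tendsto_intros) simp_all
    then show "((\<lambda>x. \<alpha> * euler f x + \<beta> * euler g x) \<longlongrightarrow> 0) (at_right 0)" by simp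
    show "\<forall>r\<in>{0<..<1/2}. euler (\<lambda>x. \<alpha> * f x + \<beta> * g x) r = \<alpha> * euler f r + \<beta> * euler g r"
    proof
      fix r :: real assume r: "r \<in> {0<..<1/2}"
      have "((\<lambda>x. \<alpha> * f x + \<beta> * g x) has_real_derivative \<alpha> * deriv f r + \<beta> * deriv g r) (at r)"
        using tame_has_deriv[OF f r] tame_has_deriv[OF g r] by (auto intro!: derivative_eq_intros)
      then show "euler (\<lambda>x. \<alpha> * f x + \<beta> * g x) r = \<alpha> * euler f r + \<beta> * euler g r"
        using DERIV_imp_deriv by (fastforce simp: euler_def algebra_simps)
    qed
  qed
qed

lemma euler_tame_add: "euler_tame n f \<Longrightarrow> euler_tame n g \<Longrightarrow> euler_tame n (\<lambda>x. f x + g x)"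
  using euler_tame_lin[of n f g 1 1] by simp

lemma euler_tame_diff: "euler_tame n f \<Longrightarrow> euler_tame n g \<Longrightarrow> euler_tame n (\<lambda>x. f x - g x)"
  using euler_tame_lin[of n f g 1 "-1"] by simp

lemma euler_tame_scale: "euler_tame n f \<Longrightarrow> euler_tame n (\<lambda>x. c * f x)"
  using euler_tame_lin[of n f f c 0] by simp

lemma tame_mult:
  assumes f: "tame f" and g: "tame g"
  shows "tame (\<lambda>x. f x * g x)"
proof -
  obtain lf lg where "(f \<longlongrightarrow> lf) (at_right 0)" "(g \<longlongrightarrow> lg) (at_right 0)"
    using f g unfolding tame_def by blast
  then have "((\<lambda>x. f x * g x) \<longlongrightarrow> lf * lg) (at_right 0)"
    by (intro tendsto_intros)
  then show ?thesis using f g unfolding tame_def by (auto intro!: derivative_intros)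
qed

lemma euler_tame_mult:
  "euler_tame n f \<Longrightarrow> euler_tame n g \<Longrightarrow> euler_tame n (\<lambda>x. f x * g x)"
proof (induction n arbitrary: f g)
  case 0
  then show ?case using tame_mult by simp
next
  case (Suc n)
  then have f: "tame f" and g: "tame g" by simp_all
  obtain lf lg where lf: "(f \<longlongrightarrow> lf) (at_right 0)" and lg: "(g \<longlongrightarrow> lg) (at_right 0)"
    using f g unfolding tame_def by blast
  show ?case
  proof (rule euler_tame_SucI)
    show "tame (\<lambda>x. f x * g x)" by (rule tame_mult[OF f g])
    show "euler_tame n (\<lambda>x. euler f x * g x + f x * euler g x)"
      using Suc euler_tame_SucD by (intro euler_tame_add) simp_all
    have "((\<lambda>x. euler f x * g x + f x * euler g x) \<longlongrightarrow> 0 * lg + lf * 0) (at_right 0)"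
      using Suc.prems lf lg by (intro tendsto_intros) simp_all
    then show "((\<lambda>x. euler f x * g x + f x * euler g x) \<longlongrightarrow> 0) (at_right 0)" by simp
    show "\<forall>r\<in>{0<..<1/2}. euler (\<lambda>x. f x * g x) r = euler f r * g r + f r * euler g r"
    proof
      fix r :: real assume r: "r \<in> {0<..<1/2}"
      have "((\<lambda>x. f x * g x) has_real_derivative deriv f r * g r + f r * deriv g r) (at r)"
        using tame_has_deriv[OF f r] tame_has_deriv[OF g r] by (auto intro!: derivative_eq_intros)
      then show "euler (\<lambda>x. f x * g x) r = euler f r * g r + f r * euler g r"
        using DERIV_imp_deriv by (fastforce simp: euler_def algebra_simps)
    qed
  qed
qed

lemma tame_powr:
  assumes z: "tame z" "\<forall>x\<in>{0<..<1/2}. z x > 0" "(z \<longlongrightarrow> l) (at_right 0)" "l > 0"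
  shows "tame (\<lambda>x. z x powr p)"
proof -
  have "((\<lambda>x. z x powr p) \<longlongrightarrow> l powr p) (at_right 0)"
    using z by (auto intro!: tendsto_intros)
  moreover have "(\<lambda>x. z x powr p) differentiable (at r)" if "r \<in> {0<..<1/2}" for r
    using DERIV_fun_powr[OF tame_has_deriv[OF z(1) that]] z(2) that real_differentiable_def
    by blast
  ultimately show ?thesis unfolding tame_def by blast
qed

lemma euler_tame_powr:
  assumes z: "euler_tame n z" "\<forall>x\<in>{0<..<1/2}. z x > 0" "(z \<longlongrightarrow> l) (at_right 0)" "l > 0"
  shows "euler_tame n (\<lambda>x. z x powr p)"
  using z(1)
proof (induction n arbitrary: p)
  case 0
  then show ?case using tame_powr z by simp
next
  case (Suc n)
  then have tz: "tame z" by simp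
  show ?case
  proof (rule euler_tame_SucI)
    show "tame (\<lambda>x. z x powr p)" by (rule tame_powr[OF tz z(2-4)])
    show "euler_tame n (\<lambda>x. p * (z x powr (p - 1) * euler z x))"
      using Suc euler_tame_SucD by (intro euler_tame_scale euler_tame_mult) simp_all
    have "((\<lambda>x. p * (z x powr (p - 1) * euler z x)) \<longlongrightarrow> p * (l powr (p - 1) * 0)) (at_right 0)"
      using Suc.prems z by (intro tendsto_intros) simp_all
    then show "((\<lambda>x. p * (z x powr (p - 1) * euler z x)) \<longlongrightarrow> 0) (at_right 0)" by simp
    show "\<forall>r\<in>{0<..<1/2}. euler (\<lambda>x. z x powr p) r = p * (z r powr (p - 1) * euler z r)"
    proof
      fix r :: real assume r: "r \<in> {0<..<1/2}"
      have "((\<lambda>x. z x powr p) has_real_derivative p * z r powr (p - 1) * deriv z r) (at r)"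
        using DERIV_fun_powr[OF tame_has_deriv[OF tz r]] z(2) r by simp
      then show "euler (\<lambda>x. z x powr p) r = p * (z r powr (p - 1) * euler z r)"
        using DERIV_imp_deriv by (fastforce simp: euler_def algebra_simps)
    qed
  qed
qed

lemma euler_tame_ln:
  assumes z: "euler_tame n z" "\<forall>x\<in>{0<..<1/2}. z x > 0" "(z \<longlongrightarrow> l) (at_right 0)" "l > 0"
  shows "euler_tame n (\<lambda>x. ln (z x))"
proof -
  have tz: "tame z" using euler_tame_tame[OF z(1)] .
  have ln_deriv: "((\<lambda>x. ln (z x)) has_real_derivative z r powr (-1) * deriv z r) (at r)"
    if r: "r \<in> {0<..<1/2}" for r
  proof -
    have "z r > 0" using z(2) r by blast
    then show ?thesis using tame_has_deriv[OF tz r]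
      by (auto intro!: derivative_eq_intros simp: powr_minus_divide)
  qed
  have tame_ln: "tame (\<lambda>x. ln (z x))"
  proof -
    have "((\<lambda>x. ln (z x)) \<longlongrightarrow> ln l) (at_right 0)"
      using z by (auto intro!: tendsto_intros)
    then show ?thesis using ln_deriv real_differentiable_def unfolding tame_def by blast
  qed
  show ?thesis
  proof (cases n)
    case 0
    then show ?thesis using tame_ln by simp
  next
    case (Suc m)
    show ?thesis unfolding Suc
    proof (rule euler_tame_SucI[OF tame_ln])
      show "euler_tame m (\<lambda>x. z x powr (-1) * euler z x)"
        using z Suc euler_tame_SucD
        by (intro euler_tame_mult euler_tame_powr[of m z]) simp_all
      have "((\<lambda>x. z x powr (-1) * euler z x) \<longlongrightarrow> l powr (-1) * 0) (at_right 0)"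
        using z Suc by (intro tendsto_intros) simp_all
      then show "((\<lambda>x. z x powr (-1) * euler z x) \<longlongrightarrow> 0) (at_right 0)" by simp
      show "\<forall>r\<in>{0<..<1/2}. euler (\<lambda>x. ln (z x)) r = z r powr (-1) * euler z r"
        using ln_deriv DERIV_imp_deriv by (fastforce simp: euler_def algebra_simps)
    qed
  qed
qed

lemma euler_tame_const: "euler_tame n (\<lambda>x. c)"
proof -
  have "euler (\<lambda>x. c) = (\<lambda>x. 0)" for c :: real by (simp add: fun_eq_iff euler_def)
  then show ?thesis by (induction n arbitrary: c) (auto simp: tame_def)
qed

lemma euler_tame_id: "euler_tame n (\<lambda>x. x)"
proof -
  have "((\<lambda>x::real. x) \<longlongrightarrow> 0) (at_right 0)" by (intro tendsto_intros)
  moreover have "euler (\<lambda>x. x) = (\<lambda>x. x)" by (simp add: fun_eq_iff euler_def)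
  ultimately show ?thesis by (induction n) (auto simp: tame_def)
qed

(* A tame solution of  L g = alpha g + h  inherits the level of h (the limits must be
   compatible, as L g -> 0 forces alpha * lim g + lim h = 0). *)
lemma euler_tame_ode:
  assumes h: "euler_tame n h" and g: "tame g" "(g \<longlongrightarrow> l) (at_right 0)"
    and lim_h: "(h \<longlongrightarrow> - \<alpha> * l) (at_right 0)"
    and ode: "\<forall>r\<in>{0<..<1/2}. euler g r = \<alpha> * g r + h r"
  shows "euler_tame n g"
  using h
proof (induction n)
  case 0
  then show ?case using g by simp
next
  case (Suc n)
  show ?case
  proof (rule euler_tame_SucI[OF g(1) _ _ ode])
    show "euler_tame n (\<lambda>r. \<alpha> * g r + h r)"
      using Suc euler_tame_SucD euler_tame_lin[of n g h \<alpha> 1] by simp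
    have "((\<lambda>r. \<alpha> * g r + h r) \<longlongrightarrow> \<alpha> * l + - \<alpha> * l) (at_right 0)"
      using g lim_h by (intro tendsto_intros)
    then show "((\<lambda>r. \<alpha> * g r + h r) \<longlongrightarrow> 0) (at_right 0)" by simp
  qed
qed

(* sinh exceeds the identity on (0, infinity); this makes the kernel below well defined. *)
lemma less_sinh: "(x::real) > 0 \<Longrightarrow> x < sinh x"
proof -
  assume x: "x > 0"
  then have "\<exists>z>0. z < x \<and> sinh x - sinh 0 = (x - 0) * cosh z"
    by (intro MVT2) (auto intro!: derivative_eq_intros)
  then obtain z where z: "0 < z" "sinh x = x * cosh z" by auto
  have "1 < cosh z" using cosh_real_strict_mono[of 0 z] z by simp
  then show ?thesis using z x by simp
qed

definition sinh_kernel :: "real \<Rightarrow> real" where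
  "sinh_kernel u = (sinh (2*u) - 2*u) powr (1/3)"

definition profile_integral :: "real \<Rightarrow> real" where
  "profile_integral r = 2 powr (-1/3) * integral {0..arcosh (1/r)} sinh_kernel"

(* The profile: f_t(s) = s^(2/3) * Psi(|t|/s). *)
definition Psi :: "real \<Rightarrow> real" where
  "Psi r = r powr (2/3) * profile_integral r"

(* phi_root r = sqrt(1 - r^2), and phi_base r = sqrt(1 - r^2) - r^2 arcosh(1/r) written
   through elementary functions (see arcosh_inverse). *)
definition phi_root :: "real \<Rightarrow> real" where
  "phi_root r = (1 - r*r) powr (1/2)"

definition phi_base :: "real \<Rightarrow> real" where
  "phi_base r = phi_root r - r*r * ln (1 + phi_root r) + r*r * ln r"

(* The inhomogeneity of the Euler equation of Psi:  L Psi = (2/3) Psi - Phi. *)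
definition Phi :: "real \<Rightarrow> real" where
  "Phi r = phi_base r powr (1/3) * (1 - r*r) powr (-1/2)"

lemma arcosh_inverse:
  fixes r :: real
  assumes r: "0 < r" "r < 1"
  shows "phi_root r > 0"
    and "sqrt ((1/r)^2 - 1) = phi_root r / r"
    and "arcosh (1/r) = ln (1 + phi_root r) - ln r"
    and "arcosh (1/r) > 0"
proof -
  have "r * r < 1 * 1" using r by (intro mult_strict_mono) auto
  then have root: "phi_root r = sqrt (1 - r^2)"
    unfolding phi_root_def by (subst powr_half_sqrt) (auto simp: power2_eq_square)
  show pos: "phi_root r > 0" unfolding root using \<open>r * r < 1 * 1\<close> by (simp add: power2_eq_square)
  have "(1/r)^2 - 1 = (1 - r^2) / r^2" using r by (simp add: field_simps)
  then show sq: "sqrt ((1/r)^2 - 1) = phi_root r / r" using r by (simp add: root real_sqrt_divide)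
  have "arcosh (1/r) = ln (1/r + phi_root r / r)" using r sq arcosh_real_def[of "1/r"] by simp
  also have "\<dots> = ln ((1 + phi_root r) / r)" by (simp add: add_divide_distrib)
  also have "\<dots> = ln (1 + phi_root r) - ln r" using r pos by (subst ln_div) auto
  finally show "arcosh (1/r) = ln (1 + phi_root r) - ln r" .
  show "arcosh (1/r) > 0" using r by simp
qed

lemma kernel_at_arcosh:
  fixes r :: real
  assumes r: "0 < r" "r < 1"
  shows "sinh (2 * arcosh (1/r)) - 2 * arcosh (1/r) = 2 * phi_base r / r^2"
proof -
  have "sinh (2 * arcosh (1/r)) = 2 * sinh (arcosh (1/r)) * cosh (arcosh (1/r))"
    by (rule sinh_double)
  also have "\<dots> = 2 * (phi_root r / r) * (1/r)"
    using r arcosh_inverse(2)[OF r] by (simp add: sinh_arcosh_real)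
  finally show ?thesis using r unfolding arcosh_inverse(3)[OF r] phi_base_def
    by (simp add: field_simps power2_eq_square)
qed

lemma phi_base_pos:
  fixes r :: real
  assumes r: "0 < r" "r < 1"
  shows "phi_base r > 0"
proof -
  have "0 < sinh (2 * arcosh (1/r)) - 2 * arcosh (1/r)"
    using less_sinh[of "2 * arcosh (1/r)"] arcosh_inverse(4)[OF r] by simp
  then show ?thesis unfolding kernel_at_arcosh[OF r] by (simp add: zero_less_divide_iff)
qed

lemma kernel_integral_deriv:
  assumes "u > 0"
  shows "((\<lambda>u. integral {0..u} sinh_kernel) has_real_derivative sinh_kernel u) (at u)"
proof -
  have "2 * x \<le> sinh (2 * x)" if "x \<ge> 0" for x :: real
    using less_sinh[of "2 * x"] that by (cases "x = 0") auto
  then have "continuous_on {0..u+1} sinh_kernel"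
    unfolding sinh_kernel_def by (intro continuous_on_powr' continuous_intros) auto
  then have "((\<lambda>u. integral {0..u} sinh_kernel) has_real_derivative sinh_kernel u) (at u within {0..u+1})"
    using integral_has_real_derivative[of 0 "u+1" sinh_kernel u] assms by auto
  moreover have "u \<in> interior {0..u+1}" using assms by simp
  ultimately show ?thesis using at_within_interior by metis
qed

lemma profile_integral_deriv:
  fixes r :: real
  assumes r: "0 < r" "r < 1"
  shows "(profile_integral has_real_derivative - (r powr (-5/3)) * Phi r) (at r)"
proof -
  define T where "T = arcosh (1/r)"
  define E where "E = phi_base r"
  define q where "q = phi_root r"
  have q: "q > 0" "sqrt ((1/r)^2 - 1) = q / r" using arcosh_inverse[OF r] q_def by simp_all
  have inv: "((\<lambda>x. 1/x) has_real_derivative - 1 / r^2) (at r)"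
    using r by (auto intro!: derivative_eq_intros simp: power2_eq_square)
  have "1 < 1/r" using r by simp
  from DERIV_chain2[OF arcosh_real_has_field_derivative[OF this] inv]
  have dT: "((\<lambda>x. arcosh (1/x)) has_real_derivative 1 / sqrt ((1/r)^2 - 1) * (- 1 / r^2)) (at r)" .
  have D: "(profile_integral has_real_derivative
          2 powr (-1/3) * (sinh_kernel T * (1 / sqrt ((1/r)^2 - 1) * (- 1 / r^2)))) (at r)"
    unfolding profile_integral_def[abs_def] T_def
    by (intro DERIV_cmult DERIV_chain2[OF kernel_integral_deriv dT] arcosh_inverse(4)[OF r])
  have kernel_T: "sinh_kernel T = 2 powr (1/3) * E powr (1/3) / r powr (2/3)"
  proof -
    have "sinh_kernel T = (2 * E / r^2) powr (1/3)"
      unfolding sinh_kernel_def T_def E_def kernel_at_arcosh[OF r] ..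
    also have "\<dots> = 2 powr (1/3) * E powr (1/3) / (r^2) powr (1/3)"
      using phi_base_pos[OF r] E_def by (simp add: powr_mult powr_divide)
    also have "(r^2) powr (1/3) = r powr (2/3)"
      using r powr_powr[of r 2 "1/3"] powr_realpow[of r 2] by simp
    finally show ?thesis .
  qed
  have Phi_E: "Phi r = E powr (1/3) / q"
    unfolding Phi_def E_def q_def phi_root_def using r by (simp add: powr_minus_divide)
  have two: "2 powr (-1/3) * 2 powr (1/3) = (1::real)"
    using powr_add[of "2::real" "-1/3" "1/3"] by simp
  have r53: "r powr (-5/3) = 1 / (r powr (2/3) * r)"
    using powr_add[of r "2/3" 1] powr_minus_divide[of r "5/3"] r by simp
  have "2 powr (-1/3) * (sinh_kernel T * (1 / sqrt ((1/r)^2 - 1) * (- 1 / r^2)))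
      = - ((2 powr (-1/3) * 2 powr (1/3)) * E powr (1/3) / (r powr (2/3) * r * q))"
    unfolding kernel_T q(2) using r q(1) by (simp add: field_simps power2_eq_square)
  also have "\<dots> = - (r powr (-5/3)) * Phi r"
    unfolding two Phi_E r53 by simp
  finally show ?thesis using D by simp
qed

lemma Psi_euler:
  fixes r :: real
  assumes r: "0 < r" "r < 1"
  shows "Psi differentiable (at r)" and "euler Psi r = 2/3 * Psi r - Phi r"
proof -
  have D: "(Psi has_real_derivative
      2/3 * r powr (2/3 - 1) * profile_integral r + r powr (2/3) * (- (r powr (-5/3)) * Phi r)) (at r)"
    using DERIV_mult[OF has_real_derivative_powr[OF r(1), of "2/3"] profile_integral_deriv[OF r]]
    unfolding Psi_def[abs_def] by (simp add: algebra_simps)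
  then show "Psi differentiable (at r)" using real_differentiable_def by blast
  have a: "r * r powr (2/3 - 1) = r powr (2/3)"
    using powr_add[of r 1 "2/3 - 1"] r by simp
  have b: "r * r powr (2/3) * r powr (-5/3) = 1"
    using powr_add[of r 1 "2/3"] powr_add[of r "1 + 2/3" "-5/3"] r by simp
  have "euler Psi r = 2/3 * (r * r powr (2/3 - 1)) * profile_integral r
                      - (r * r powr (2/3) * r powr (-5/3)) * Phi r"
    unfolding euler_def DERIV_imp_deriv[OF D] by (simp add: algebra_simps)
  also have "\<dots> = 2/3 * Psi r - Phi r"
    unfolding a b Psi_def by simp
  finally show "euler Psi r = 2/3 * Psi r - Phi r" .
qed

lemma phi_root_lim: "(phi_root \<longlongrightarrow> 1) (at_right 0)"
  unfolding phi_root_def[abs_def] by real_asymp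

lemma phi_base_lim: "(phi_base \<longlongrightarrow> 1) (at_right 0)"
  unfolding phi_base_def[abs_def] phi_root_def by real_asymp

lemma Phi_lim: "(Phi \<longlongrightarrow> 1) (at_right 0)"
  unfolding Phi_def[abs_def] phi_base_def phi_root_def by real_asymp

(* L'Hopital: profile_integral r ~ (3/2) r^(-2/3), as its derivative is ~ -r^(-5/3). *)
lemma Psi_lim: "(Psi \<longlongrightarrow> 3/2) (at_right 0)"
proof -
  have ev: "eventually (\<lambda>x. x \<in> {0<..<1}) (at_right (0::real))"
    by (rule eventually_at_right_real) simp
  have "((\<lambda>x. profile_integral x / x powr (-2/3)) \<longlongrightarrow> 3/2) (at_right 0)"
  proof (rule lhopital_right_0_at_top[where f' = "\<lambda>x. - (x powr (-5/3)) * Phi x"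
                                         and g' = "\<lambda>x. -2/3 * x powr (-5/3)"])
    show "LIM x at_right 0. x powr (-2/3) :> (at_top :: real filter)" by real_asymp
    show "\<forall>\<^sub>F x in at_right 0. -2/3 * x powr (-5/3) \<noteq> (0::real)"
      using ev by eventually_elim simp
    show "\<forall>\<^sub>F x in at_right 0. (profile_integral has_real_derivative - (x powr (-5/3)) * Phi x) (at x)"
      using ev by eventually_elim (rule profile_integral_deriv; simp)
    show "\<forall>\<^sub>F x in at_right 0. ((\<lambda>x. x powr (-2/3)) has_real_derivative -2/3 * x powr (-5/3)) (at x)"
      using ev by eventually_elim (use has_real_derivative_powr[of _ "-2/3"] in simp)
    have "\<forall>\<^sub>F x in at_right 0. 3/2 * Phi x = - (x powr (-5/3)) * Phi x / (-2/3 * x powr (-5/3))"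
      using ev by eventually_elim simp
    moreover have "((\<lambda>x. 3/2 * Phi x) \<longlongrightarrow> 3/2 * 1) (at_right 0)"
      by (intro tendsto_intros Phi_lim)
    ultimately show "((\<lambda>x. - (x powr (-5/3)) * Phi x / (-2/3 * x powr (-5/3))) \<longlongrightarrow> 3/2) (at_right 0)"
      using tendsto_cong by fastforce
  qed
  moreover have "\<forall>\<^sub>F x in at_right 0. profile_integral x / x powr (-2/3) = Psi x"
    using ev by eventually_elim (simp add: Psi_def powr_minus_divide)
  ultimately show ?thesis using tendsto_cong by fastforce
qed

(* r^2 ln r lies in every class, by its Euler equation  L(r^2 ln r) = 2 r^2 ln r + r^2. *)
lemma euler_tame_sq_ln: "euler_tame n (\<lambda>r. r*r * ln r)"
proof -
  have D: "((\<lambda>r. r*r * ln r) has_real_derivative 2 * r * ln r + r) (at r)" if "r > 0" for r :: real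
    using that by (auto intro!: derivative_eq_intros simp: field_simps)
  have lim: "((\<lambda>r::real. r*r * ln r) \<longlongrightarrow> 0) (at_right 0)" by real_asymp
  have "tame (\<lambda>r. r*r * ln r)"
    unfolding tame_def using D lim real_differentiable_def by fastforce
  moreover have "((\<lambda>r::real. r*r) \<longlongrightarrow> - 2 * 0) (at_right 0)" by real_asymp
  moreover have "\<forall>r\<in>{0<..<1/2}. euler (\<lambda>r. r*r * ln r) r = 2 * (r*r * ln r) + r*r"
    using D DERIV_imp_deriv by (fastforce simp: euler_def algebra_simps)
  ultimately show ?thesis
    using euler_tame_ode[OF euler_tame_mult[OF euler_tame_id euler_tame_id] _ lim] by blast
qed

(* Phi is assembled from r, sqrt(1 - r^2), ln and powers, hence in every class. *)
lemma Phi_euler_tame: "euler_tame n Phi"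
proof -
  have in_unit: "0 < r \<and> r < 1" if "r \<in> {0<..<1/2}" for r :: real using that by auto
  have sq: "euler_tame n (\<lambda>r. 1 - r*r)"
    using euler_tame_diff[OF euler_tame_const euler_tame_mult[OF euler_tame_id euler_tame_id]] .
  have sq_pos: "\<forall>r\<in>{0<..<1/2}. 1 - r*r > (0::real)"
  proof
    fix r :: real assume "r \<in> {0<..<1/2}"
    then have "r * r < 1 * 1" by (intro mult_strict_mono) auto
    then show "1 - r*r > 0" by simp
  qed
  have "((\<lambda>r::real. 1 - r*r) \<longlongrightarrow> 1 - 0 * 0) (at_right 0)" by (intro tendsto_intros)
  then have sq_lim: "((\<lambda>r::real. 1 - r*r) \<longlongrightarrow> 1) (at_right 0)" by simp
  have root: "euler_tame n phi_root"
    unfolding phi_root_def[abs_def] by (rule euler_tame_powr[OF sq sq_pos sq_lim]) simp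
  have log: "euler_tame n (\<lambda>r. ln (1 + phi_root r))"
  proof (rule euler_tame_ln)
    show "euler_tame n (\<lambda>r. 1 + phi_root r)" by (rule euler_tame_add[OF euler_tame_const root])
    show "\<forall>r\<in>{0<..<1/2}. 1 + phi_root r > 0"
      using arcosh_inverse(1) in_unit by (meson add_pos_pos zero_less_one)
    show "((\<lambda>r. 1 + phi_root r) \<longlongrightarrow> 1 + 1) (at_right 0)" by (intro tendsto_intros phi_root_lim)
  qed simp
  have sq': "euler_tame n (\<lambda>r. r*r)" by (rule euler_tame_mult[OF euler_tame_id euler_tame_id])
  have base: "euler_tame n phi_base"
    unfolding phi_base_def[abs_def]
    by (rule euler_tame_add[OF euler_tame_diff[OF root euler_tame_mult[OF sq' log]] euler_tame_sq_ln])
  have base_pos: "\<forall>r\<in>{0<..<1/2}. phi_base r > 0" using phi_base_pos in_unit by blast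
  show ?thesis
    unfolding Phi_def[abs_def]
    by (rule euler_tame_mult[OF euler_tame_powr[OF base base_pos phi_base_lim]
                                euler_tame_powr[OF sq sq_pos sq_lim]]) simp_all
qed

(* Psi solves L Psi = (2/3) Psi - Phi with compatible limits 3/2 and 1. *)
lemma Psi_euler_tame: "euler_tame n Psi"
proof (rule euler_tame_ode[where h = "\<lambda>r. - Phi r" and \<alpha> = "2/3" and l = "3/2"])
  show "euler_tame n (\<lambda>r. - Phi r)" using euler_tame_scale[OF Phi_euler_tame, where c = "-1"] by simp
  show "tame Psi" unfolding tame_def using Psi_euler(1) Psi_lim by auto
  show "(Psi \<longlongrightarrow> 3/2) (at_right 0)" by (rule Psi_lim)
  have "((\<lambda>r. - Phi r) \<longlongrightarrow> - 1) (at_right 0)" by (intro tendsto_intros Phi_lim)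
  then show "((\<lambda>r. - Phi r) \<longlongrightarrow> - (2/3) * (3/2)) (at_right 0)" by simp
  show "\<forall>r\<in>{0<..<1/2}. euler Psi r = 2/3 * Psi r + - Phi r" using Psi_euler(2) by simp
qed

(* The profiles of the higher derivatives:  f_t^(k)(s) = s^(2/3-k) * Psi_seq k (|t|/s). *)
primrec Psi_seq :: "nat \<Rightarrow> real \<Rightarrow> real" where
  "Psi_seq 0 = Psi"
| "Psi_seq (Suc k) = (\<lambda>r. (2/3 - real k) * Psi_seq k r - euler (Psi_seq k) r)"

(* The coefficients of the derivatives of f_0:  f_0^(k)(s) = f0_coeff k * s^(2/3-k). *)
primrec f0_coeff :: "nat \<Rightarrow> real" where
  "f0_coeff 0 = 3/2"
| "f0_coeff (Suc k) = (2/3 - real k) * f0_coeff k"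

lemma Psi_seq_euler_tame: "euler_tame n (Psi_seq k)"
proof (induction k arbitrary: n)
  case 0
  then show ?case using Psi_euler_tame by simp
next
  case (Suc k)
  have "euler_tame n (Psi_seq k)" and "euler_tame n (euler (Psi_seq k))"
    using Suc[of "Suc n"] euler_tame_SucD by simp_all
  then show ?case
    using euler_tame_lin[of n "Psi_seq k" "euler (Psi_seq k)" "2/3 - real k" "-1"] by simp
qed

(* Since L Psi_seq k -> 0, the recursion for Psi_seq passes to the limit. *)
lemma Psi_seq_lim: "(Psi_seq k \<longlongrightarrow> f0_coeff k) (at_right 0)"
proof (induction k)
  case 0
  then show ?case using Psi_lim by simp
next
  case (Suc k)
  have "(euler (Psi_seq k) \<longlongrightarrow> 0) (at_right 0)"
    using Psi_seq_euler_tame[of "Suc 0" k] by simp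
  then have "((\<lambda>r. (2/3 - real k) * Psi_seq k r - euler (Psi_seq k) r)
               \<longlongrightarrow> (2/3 - real k) * f0_coeff k - 0) (at_right 0)"
    using Suc by (intro tendsto_intros)
  then show ?case by simp
qed

lemma higher_deriv_cong:
  assumes "open U" "\<forall>x\<in>U. f x = g x"
  shows "\<forall>x\<in>U. (deriv ^^ k) f x = (deriv ^^ k) g x"
proof (induction k)
  case 0
  then show ?case using assms(2) by simp
next
  case (Suc k)
  then show ?case using deriv_cong_ev[OF eq_on_open_nhds[OF assms(1)]] by simp
qed

lemma scaled_profile_derivs:
  assumes a: "a > 0"
  shows "\<forall>s\<in>{2*a<..}. (deriv ^^ k) (\<lambda>s. s powr (2/3) * Psi (a/s)) s
                        = s powr (2/3 - real k) * Psi_seq k (a/s)"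
proof (induction k)
  case 0
  then show ?case by simp
next
  case (Suc k)
  show ?case
  proof
    fix s assume s: "s \<in> {2*a<..}"
    define e where "e = 2/3 - real k"
    define r where "r = a / s"
    have s0: "s > 0" using s a by simp
    have r: "r \<in> {0<..<1/2}" using s a by (auto simp: r_def field_simps)
    have dPsi: "(Psi_seq k has_real_derivative deriv (Psi_seq k) r) (at r)"
      using tame_has_deriv[OF euler_tame_tame[OF Psi_seq_euler_tame] r] .
    have "((\<lambda>s. a / s) has_real_derivative - a / s^2) (at s)"
      using s0 by (auto intro!: derivative_eq_intros simp: power2_eq_square)
    from DERIV_mult[OF has_real_derivative_powr[OF s0, of e] DERIV_chain2[OF dPsi[unfolded r_def] this]]
    have D: "((\<lambda>s. s powr e * Psi_seq k (a/s)) has_real_derivative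
              e * s powr (e - 1) * Psi_seq k r + deriv (Psi_seq k) r * (- a / s^2) * s powr e) (at s)"
      unfolding r_def by (simp add: algebra_simps)
    have "s powr e = s powr (e - 1) * s" using powr_add[of s "e - 1" 1] s0 by simp
    then have val: "e * s powr (e - 1) * Psi_seq k r + deriv (Psi_seq k) r * (- a / s^2) * s powr e
        = s powr (e - 1) * (e * Psi_seq k r - euler (Psi_seq k) r)"
      unfolding euler_def r_def using s0 by (simp add: field_simps power2_eq_square)
    have "(deriv ^^ Suc k) (\<lambda>s. s powr (2/3) * Psi (a/s)) s
        = deriv (\<lambda>s. s powr e * Psi_seq k (a/s)) s"
      using deriv_cong_ev[OF eq_on_open_nhds[OF open_greaterThan Suc s] refl] e_def by simp
    also have "\<dots> = s powr (2/3 - real (Suc k)) * Psi_seq (Suc k) (a/s)"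
      using DERIV_imp_deriv[OF D] val unfolding e_def r_def by (simp add: algebra_simps)
    finally show "(deriv ^^ Suc k) (\<lambda>s. s powr (2/3) * Psi (a/s)) s
        = s powr (2/3 - real (Suc k)) * Psi_seq (Suc k) (a/s)" .
  qed
qed

lemma f0_derivs: "s > 0 \<Longrightarrow> (deriv ^^ k) f0 s = f0_coeff k * s powr (2/3 - real k)"
proof (induction k arbitrary: s)
  case 0
  then show ?case by (simp add: f0_def)
next
  case (Suc k)
  have "(deriv ^^ Suc k) f0 s = deriv (\<lambda>s. f0_coeff k * s powr (2/3 - real k)) s"
    using deriv_cong_ev[OF eq_on_open_nhds[OF open_greaterThan _ Suc.prems[folded greaterThan_iff]] refl]
      Suc.IH by simp
  also have "\<dots> = f0_coeff k * ((2/3 - real k) * s powr (2/3 - real k - 1))"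
    by (rule DERIV_imp_deriv[OF DERIV_cmult[OF has_real_derivative_powr[OF Suc.prems]]])
  also have "\<dots> = f0_coeff (Suc k) * s powr (2/3 - real (Suc k))"
    by (simp add: algebra_simps)
  finally show ?case .
qed

lemma ft_scaling:
  assumes "cmod t > 0" "s > 0"
  shows "ft t s = s powr (2/3) * Psi (cmod t / s)"
proof -
  have "s powr (2/3) * (cmod t / s) powr (2/3) = cmod t powr (2/3)"
    using assms by (simp add: powr_divide)
  then show ?thesis
    unfolding ft_def Psi_def profile_integral_def sinh_kernel_def[abs_def]
    by (simp add: algebra_simps)
qed

lemma ft_derivs:
  assumes "cmod t > 0" "s > 2 * cmod t"
  shows "(deriv ^^ k) (ft t) s = s powr (2/3 - real k) * Psi_seq k (cmod t / s)"
proof -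
  have eq: "\<forall>x\<in>{0<..}. ft t x = x powr (2/3) * Psi (cmod t / x)"
    using ft_scaling[OF assms(1)] by simp
  have "s > 0" using assms(2) norm_ge_zero[of t] by linarith
  then have "(deriv ^^ k) (ft t) s = (deriv ^^ k) (\<lambda>x. x powr (2/3) * Psi (cmod t / x)) s"
    using higher_deriv_cong[OF open_greaterThan eq, of k] by simp
  then show ?thesis using scaled_profile_derivs[OF assms(1)] assms(2) by simp
qed

lemma ft_derivs_close:
  assumes "\<delta> > 0" "\<epsilon> > 0"
  obtains \<rho> where "\<rho> > 0"
    "\<And>t s. 0 < cmod t \<Longrightarrow> cmod t < \<rho> \<Longrightarrow> \<delta> \<le> s \<Longrightarrow>
       \<bar>(deriv ^^ k) (ft t) s - (deriv ^^ k) f0 s\<bar> < \<epsilon> * s powr (2/3 - real k)"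
proof -
  have "eventually (\<lambda>r. dist (Psi_seq k r) (f0_coeff k) < \<epsilon>) (at_right 0)"
    using Psi_seq_lim assms(2) tendsto_iff by blast
  then obtain \<eta> where \<eta>: "\<eta> > 0" "\<And>r. 0 < r \<Longrightarrow> r < \<eta> \<Longrightarrow> \<bar>Psi_seq k r - f0_coeff k\<bar> < \<epsilon>"
    unfolding eventually_at_right_field dist_real_def by auto
  show ?thesis
  proof (rule that[of "min (\<delta>/2) (\<eta> * \<delta>)"])
    show "min (\<delta>/2) (\<eta> * \<delta>) > 0" using assms \<eta>(1) by simp
    fix t :: complex and s :: real
    assume t: "0 < cmod t" "cmod t < min (\<delta>/2) (\<eta> * \<delta>)" and s: "\<delta> \<le> s"
    have "\<eta> * \<delta> \<le> \<eta> * s" using s \<eta>(1) by simp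
    then have r: "0 < cmod t / s" "cmod t / s < \<eta>"
      using t s assms(1) by (simp_all add: divide_less_eq mult.commute)
    have "(deriv ^^ k) (ft t) s - (deriv ^^ k) f0 s
        = s powr (2/3 - real k) * (Psi_seq k (cmod t / s) - f0_coeff k)"
      using ft_derivs[OF t(1)] f0_derivs[of s k] t s assms(1) by (simp add: algebra_simps)
    then show "\<bar>(deriv ^^ k) (ft t) s - (deriv ^^ k) f0 s\<bar> < \<epsilon> * s powr (2/3 - real k)"
      using \<eta>(2)[OF r] s assms(1) by (simp add: abs_mult)
  qed
qed

lemma powr_le_on_interval:
  assumes "(0::real) < \<delta>" "\<delta> \<le> s" "s \<le> 1"
  shows "s powr c \<le> max (\<delta> powr c) 1"
proof (cases "c \<ge> 0")
  case True
  then have "s powr c \<le> 1 powr c" using assms by (intro powr_mono2) auto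
  then show ?thesis by simp
next
  case False
  then have "s powr c \<le> \<delta> powr c" using assms by (intro powr_mono2') auto
  then show ?thesis by simp
qed

lemma ratio_bounds:
  fixes x y :: real
  assumes "y \<noteq> 0" "\<bar>x - y\<bar> \<le> \<bar>y\<bar> / 2"
  shows "1/2 \<le> x / y \<and> x / y \<le> 2"
proof -
  have "x / y - 1 = (x - y) / y" using assms(1) by (simp add: field_simps)
  then have "\<bar>x / y - 1\<bar> = \<bar>x - y\<bar> / \<bar>y\<bar>" by (simp add: abs_divide)
  also have "\<dots> \<le> 1/2" using assms by (simp add: divide_le_eq)
  finally show ?thesis by linarith
qed

lemma ft_derivs_uniform_limit:
  assumes "0 < \<delta>"
  shows "uniform_limit {\<delta>..1} (\<lambda>t. (deriv ^^ k) (ft t)) ((deriv ^^ k) f0) (at (0::complex))"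
  unfolding uniform_limit_iff
proof (intro allI impI)
  fix e :: real assume e: "e > 0"
  define B where "B = max (\<delta> powr (2/3 - real k)) 1"
  have B: "B > 0" unfolding B_def by simp
  obtain \<rho> where \<rho>: "\<rho> > 0" "\<And>t s. 0 < cmod t \<Longrightarrow> cmod t < \<rho> \<Longrightarrow> \<delta> \<le> s \<Longrightarrow>
       \<bar>(deriv ^^ k) (ft t) s - (deriv ^^ k) f0 s\<bar> < e / B * s powr (2/3 - real k)"
    using ft_derivs_close[OF assms divide_pos_pos[OF e B]] by blast
  show "\<forall>\<^sub>F t in at 0. \<forall>s\<in>{\<delta>..1}. dist ((deriv ^^ k) (ft t) s) ((deriv ^^ k) f0 s) < e"
    unfolding eventually_at
  proof (intro exI[of _ \<rho>] conjI ballI impI \<rho>(1))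
    fix t :: complex and s :: real
    assume t: "t \<noteq> 0 \<and> dist t 0 < \<rho>" and s: "s \<in> {\<delta>..1}"
    have "s powr (2/3 - real k) \<le> B"
      unfolding B_def using powr_le_on_interval assms s by simp
    then have "e / B * s powr (2/3 - real k) \<le> e"
      using B e by (simp add: divide_le_eq mult.commute)
    then show "dist ((deriv ^^ k) (ft t) s) ((deriv ^^ k) f0 s) < e"
      using \<rho>(2)[of t s] t s by (simp add: dist_real_def)
  qed
qed

lemma ft_derivs_ratio:
  assumes "0 < \<delta>'"
  shows "\<exists>\<alpha>>0. \<forall>t::complex. 0 < cmod t \<and> cmod t < \<alpha> \<longrightarrow> (\<forall>s\<ge>\<delta>'.
           1/2 \<le> deriv (ft t) s / deriv f0 s \<and> deriv (ft t) s / deriv f0 s \<le> 2 \<and>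
           1/2 \<le> deriv (deriv (ft t)) s / deriv (deriv f0) s \<and>
           deriv (deriv (ft t)) s / deriv (deriv f0) s \<le> 2)"
proof -
  obtain \<rho>1 where \<rho>1: "\<rho>1 > 0" "\<And>t s. 0 < cmod t \<Longrightarrow> cmod t < \<rho>1 \<Longrightarrow> \<delta>' \<le> s \<Longrightarrow>
       \<bar>(deriv ^^ 1) (ft t) s - (deriv ^^ 1) f0 s\<bar> < 1/2 * s powr (2/3 - real 1)"
    using ft_derivs_close[OF assms, of "1/2" 1] by (metis half_gt_zero zero_less_one)
  obtain \<rho>2 where \<rho>2: "\<rho>2 > 0" "\<And>t s. 0 < cmod t \<Longrightarrow> cmod t < \<rho>2 \<Longrightarrow> \<delta>' \<le> s \<Longrightarrow>
       \<bar>(deriv ^^ 2) (ft t) s - (deriv ^^ 2) f0 s\<bar> < 1/6 * s powr (2/3 - real 2)"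
    using ft_derivs_close[OF assms, of "1/6" 2] by (metis divide_pos_pos zero_less_one zero_less_numeral)
  show ?thesis
  proof (intro exI[of _ "min \<rho>1 \<rho>2"] conjI allI impI)
    show "min \<rho>1 \<rho>2 > 0" using \<rho>1 \<rho>2 by simp
    fix t :: complex and s :: real
    assume t: "0 < cmod t \<and> cmod t < min \<rho>1 \<rho>2" and s: "\<delta>' \<le> s"
    have s0: "s > 0" using s assms by simp
    have f1: "deriv f0 s = s powr (2/3 - real 1)" and f2: "deriv (deriv f0) s = -1/3 * s powr (2/3 - real 2)"
      using f0_derivs[OF s0, of 1] f0_derivs[OF s0, of 2] by (simp_all add: numeral_2_eq_2)
    have "\<bar>deriv (ft t) s - deriv f0 s\<bar> \<le> \<bar>deriv f0 s\<bar> / 2"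
      using \<rho>1(2)[of t s] t s f1 by simp
    then show "1/2 \<le> deriv (ft t) s / deriv f0 s" "deriv (ft t) s / deriv f0 s \<le> 2"
      using ratio_bounds[of "deriv f0 s"] s0 unfolding f1 by auto
    have "\<bar>deriv (deriv (ft t)) s - deriv (deriv f0) s\<bar> \<le> \<bar>deriv (deriv f0) s\<bar> / 2"
      using \<rho>2(2)[of t s] t s f2 by (simp add: numeral_2_eq_2 abs_mult)
    then show "1/2 \<le> deriv (deriv (ft t)) s / deriv (deriv f0) s"
      "deriv (deriv (ft t)) s / deriv (deriv f0) s \<le> 2"
      using ratio_bounds[of "deriv (deriv f0) s"] s0 unfolding f2 by auto
  qed
qed

theorem lemma3p2:
  shows "(\<forall>\<delta>::real. \<forall>k::nat. 0 < \<delta> \<and> \<delta> < 1 \<longrightarrow>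
            uniform_limit {\<delta>..1} (\<lambda>t. (deriv ^^ k) (ft t)) ((deriv ^^ k) f0) (at (0::complex)))
       \<and> (\<forall>\<delta>'::real. 0 < \<delta>' \<and> \<delta>' < 1/4 \<longrightarrow>
            (\<exists>\<alpha>>0. \<forall>\<delta>::real. \<delta>' < \<delta> \<and> \<delta> < 1/4 \<longrightarrow>
               (\<forall>t::complex. 0 < cmod t \<and> cmod t < \<alpha> \<longrightarrow>
                 (\<forall>s\<in>{\<delta>'..\<delta>}.
                    1/2 \<le> deriv (ft t) s / deriv f0 s \<and> deriv (ft t) s / deriv f0 s \<le> 2 \<and>
                    1/2 \<le> deriv (deriv (ft t)) s / deriv (deriv f0) s \<and>
                    deriv (deriv (ft t)) s / deriv (deriv f0) s \<le> 2))))"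
  \<comment> \<open>part (1) is ft_derivs_uniform_limit; part (2) restricts ft_derivs_ratio to [delta', delta]\<close>
  using ft_derivs_uniform_limit ft_derivs_ratio by (meson atLeastAtMost_iff)

end
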